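(* Let $X\subset\mathbb{R}^n$ be a nonempty compact convex set with diameter $D_X:=\max_{x,y\in X}\|x-y\|$ (Euclidean norm). Let $u\in X$, $g\in\mathbb{R}^n$, $\beta>0$, $\eta>0$, and let $\phi(x):=\langle g,x\rangle+\frac{\beta}{2}\|x-u\|^2$. Consider the ACGM procedure described in the context, with tolerances $\delta^t\ge 0$. Let $\{\lambda^t\}_{t\ge1}\subset[0,1]$ be any predetermined sequence with $\lambda^1=1$, and define $\Lambda^1:=1$ and $\Lambda^t:=\Lambda^{t-1}(1-\lambda^t)$ for $t>1$. Suppose the step sizes $\alpha^t$ of the procedure are chosen so that $$\phi(u^t)\le \phi\big((1-\lambda^t)u^{t-1}+\lambda^t v^t\big)\quad\text{for all } t\ge 1 .$$ Then for all $t\ge 2$ (for which the iterates $u^1,\dots,u^t$ have been generated), $$\sum_{j=2}^t \frac{\lambda^j}{\Lambda^j}\max_{x\in X}\langle\nabla\phi(u^{j-1}),u^{j-1}-x\rangle \le \Big[\delta^1+\sum_{j=2}^t\frac{\lambda^j}{\Lambda^j}\Big(\delta^j+\Lambda^{j-1}\sum_{i=1}^{j-1}\frac{\lambda^i}{\Lambda^i}\delta^i\Big)\Big] + \frac{\beta D_X^2}{2}\Big[1+\sum_{j=2}^t\frac{\lambda^j}{\Lambda^j}\Big(\lambda^j+\Lambda^{j-1}\sum_{i=1}^{j-1}\frac{(\lambda^i)^2}{\Lambda^i}\Big)\Big].$$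
   Context: Note $\nabla\phi(x)=g+\beta(x-u)$. ACGM (approximate conditional gradient method) procedure for $\min_{x\in X}\phi(x)$, with input $u,g,\beta,\eta$ and a sequence of tolerances $\delta^t\ge0$: set $u^0:=u$. For $t=1,2,\dots$: compute $v^t\in X$ such that $\langle\nabla\phi(u^{t-1}),v^t-x\rangle\le\delta^t$ for all $x\in X$ (an approximate solution of the linear subproblem $\min_{x\in X}\langle\nabla\phi(u^{t-1}),x\rangle$). If $\langle\nabla\phi(u^{t-1}),u^{t-1}-v^t\rangle\le\eta-\delta^t$, stop and output $u^+:=u^{t-1}$. Otherwise set $u^t:=(1-\alpha^t)u^{t-1}+\alpha^t v^t$ with some step size $\alpha^t\in[0,1]$, and continue. *)

theory Defs
  imports "HOL-Analysis.Analysis"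
begin

definition phi :: "'a::euclidean_space \<Rightarrow> 'a \<Rightarrow> real \<Rightarrow> 'a \<Rightarrow> real" where
  "phi g u \<beta> x = inner g x + \<beta> / 2 * (norm (x - u))\<^sup>2"

definition grad_phi :: "'a::euclidean_space \<Rightarrow> 'a \<Rightarrow> real \<Rightarrow> 'a \<Rightarrow> 'a" where
  "grad_phi g u \<beta> x = g + \<beta> *\<^sub>R (x - u)"

text \<open>Lambda^1 = 1, Lambda^t = Lambda^(t-1) (1 - lambda^t) for t > 1
  (the value at index 0 is irrelevant and set to 1).\<close>
fun Lam :: "(nat \<Rightarrow> real) \<Rightarrow> nat \<Rightarrow> real" where
  "Lam lam 0 = 1"
| "Lam lam (Suc 0) = 1"
| "Lam lam (Suc (Suc t)) = Lam lam (Suc t) * (1 - lam (Suc (Suc t)))"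

text \<open>One run of ACGM producing iterates u^0,...,u^T (none of the first T
  stopping tests fired), with u^0 = u.\<close>
definition acgm_run ::
  "'a::euclidean_space set \<Rightarrow> 'a \<Rightarrow> 'a \<Rightarrow> real \<Rightarrow> real \<Rightarrow> (nat \<Rightarrow> real)
   \<Rightarrow> (nat \<Rightarrow> 'a) \<Rightarrow> (nat \<Rightarrow> 'a) \<Rightarrow> (nat \<Rightarrow> real) \<Rightarrow> nat \<Rightarrow> bool" where
  "acgm_run X u g \<beta> \<eta> \<delta> us vs \<alpha> T \<longleftrightarrow>
     us 0 = u \<and>
     (\<forall>t\<in>{1..T}.
        vs t \<in> X \<and>
        (\<forall>x\<in>X. inner (grad_phi g u \<beta> (us (t - 1))) (vs t - x) \<le> \<delta> t) \<and>
        \<not> (inner (grad_phi g u \<beta> (us (t - 1))) (us (t - 1) - vs t) \<le> \<eta> - \<delta> t) \<and>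
        \<alpha> t \<in> {0..1} \<and>
        us t = (1 - \<alpha> t) *\<^sub>R us (t - 1) + \<alpha> t *\<^sub>R vs t)"

end

theory Submission
  imports Defs
begin

(*
  Put h_j = phi(u^j) - phi(u^T), c_j = <grad phi(u^(j-1)), u^(j-1) - v^j> and K = beta D_X^2 / 2.
  The delta-accuracy of v^j bounds <grad phi(u^(j-1)), u^(j-1) - x> by c_j + delta_j for every
  x in X, and with convexity of phi this gives h_(j-1) <= c_j + delta_j. The step rule and the
  exact quadratic expansion of phi give h_j <= h_(j-1) - lambda_j c_j + K lambda_j^2.
  Since 1/Lambda_(j-1) = (1 - lambda_j)/Lambda_j, dividing by Lambda_j turns the two estimates
  into h_m/Lambda_m <= sum_(i<=m) (lambda_i delta_i + K lambda_i^2)/Lambda_i and into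
    lambda_j/Lambda_j (c_j + delta_j)
      <= h_(j-1)/Lambda_(j-1) - h_j/Lambda_j + lambda_j/Lambda_j (delta_j + K lambda_j + h_(j-1)).
  Summing the latter over j telescopes, with h_T = 0 and h_1 <= delta_1 + K.
*)

lemma sum_diff_prev_telescope:
  fixes a :: "nat \<Rightarrow> 'a::ab_group_add"
  assumes "1 \<le> T"
  shows "(\<Sum>j=2..T. a (j - 1) - a j) = a 1 - a T"
  using assms by (induction T rule: nat_induct_at_least) auto

lemma Lam_rec:
  assumes "2 \<le> j"
  shows "Lam lam j = Lam lam (j - 1) * (1 - lam j)"
proof -
  obtain k where "j = Suc (Suc k)"
    using assms by (metis add_2_eq_Suc le_Suc_ex)
  then show ?thesis by simp
qed

lemma one_minus_lam_div_Lam: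
  assumes "2 \<le> j" "lam j \<noteq> 1"
  shows "(1 - lam j) / Lam lam j = 1 / Lam lam (j - 1)"
  using assms by (simp add: Lam_rec)

lemma Lam_pos:
  assumes "\<And>t. 2 \<le> t \<Longrightarrow> t \<le> T \<Longrightarrow> lam t < 1" "1 \<le> j" "j \<le> T"
  shows "0 < Lam lam j"
  using assms(2,3)
proof (induction j rule: nat_induct_at_least)
  case base
  then show ?case by simp
next
  case (Suc j)
  then have "0 < Lam lam j" and "lam (Suc j) < 1"
    using assms(1) by auto
  then show ?case
    using Lam_rec[of "Suc j" lam] Suc.hyps(1) by simp
qed

locale cg_descent =
  fixes f c d lam :: "nat \<Rightarrow> real" and K :: real and T :: nat
  assumes lam_first: "lam 1 = 1"
    and lam_nonneg: "\<And>j. 1 \<le> j \<Longrightarrow> j \<le> T \<Longrightarrow> 0 \<le> lam j"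
    and lam_less_1: "\<And>j. 2 \<le> j \<Longrightarrow> j \<le> T \<Longrightarrow> lam j < 1"
    and descent: "\<And>j. 1 \<le> j \<Longrightarrow> j \<le> T \<Longrightarrow> f j \<le> f (j - 1) - lam j * c j + K * (lam j)\<^sup>2"
    and gap: "\<And>j. 1 \<le> j \<Longrightarrow> j \<le> T \<Longrightarrow> f (j - 1) - f T \<le> c j + d j"
begin

lemma Lam_pos_T: "1 \<le> j \<Longrightarrow> j \<le> T \<Longrightarrow> 0 < Lam lam j"
  using Lam_pos[OF lam_less_1] .

lemma gap_recursion:
  assumes "1 \<le> j" "j \<le> T"
  shows "f j - f T \<le> (1 - lam j) * (f (j - 1) - f T) + lam j * d j + K * (lam j)\<^sup>2"
proof -
  have "lam j * (f (j - 1) - f T) \<le> lam j * (c j + d j)"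
    using gap[OF assms] lam_nonneg[OF assms] by (rule mult_left_mono)
  then show ?thesis
    using descent[OF assms] by (simp add: algebra_simps)
qed

lemma scaled_gap_bound:
  assumes "1 \<le> m" "m \<le> T"
  shows "(f m - f T) / Lam lam m
    \<le> (\<Sum>i=1..m. lam i / Lam lam i * d i) + K * (\<Sum>i=1..m. (lam i)\<^sup>2 / Lam lam i)"
  using assms
proof (induction m rule: nat_induct_at_least)
  case base
  then show ?case
    using gap_recursion[of 1] lam_first by simp
next
  case (Suc m)
  let ?j = "Suc m"
  have "?j \<in> {2..T}"
    using Suc by auto
  then have lam_ne_1: "lam ?j \<noteq> 1"
    using lam_less_1[of ?j] by auto
  have L: "0 < Lam lam ?j"
    using Lam_pos_T Suc by simp
  have "(f ?j - f T) / Lam lam ?j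
      \<le> ((1 - lam ?j) * (f m - f T) + lam ?j * d ?j + K * (lam ?j)\<^sup>2) / Lam lam ?j"
    using gap_recursion[of ?j] Suc L by (simp add: divide_right_mono)
  also have "\<dots> = (f m - f T) / Lam lam m + lam ?j / Lam lam ?j * d ?j
      + K * ((lam ?j)\<^sup>2 / Lam lam ?j)"
  proof -
    have "(1 - lam ?j) * (f m - f T) / Lam lam ?j = (f m - f T) * ((1 - lam ?j) / Lam lam ?j)"
      by simp
    also have "\<dots> = (f m - f T) / Lam lam m"
      using one_minus_lam_div_Lam[of ?j lam] Suc.hyps(1) lam_ne_1 by simp
    finally show ?thesis
      by (simp add: add_divide_distrib)
  qed
  also have "\<dots> \<le> (\<Sum>i=1..?j. lam i / Lam lam i * d i) + K * (\<Sum>i=1..?j. (lam i)\<^sup>2 / Lam lam i)"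
    using Suc by (simp add: algebra_simps)
  finally show ?case .
qed

lemma weighted_gap_step:
  assumes "j \<in> {2..T}"
  shows "lam j / Lam lam j * (c j + d j)
    \<le> (f (j - 1) - f T) / Lam lam (j - 1) - (f j - f T) / Lam lam j
      + lam j / Lam lam j * (d j + K * lam j + (f (j - 1) - f T))"
proof -
  have j: "2 \<le> j" "j \<le> T" and lam_ne_1: "lam j \<noteq> 1"
    using assms lam_less_1[of j] by auto
  have L: "0 < Lam lam j"
    using Lam_pos_T j by simp
  have "lam j * (c j + d j) \<le> (f (j - 1) - f T) - (f j - f T) + lam j * d j + K * (lam j)\<^sup>2"
    using descent[of j] j by (simp add: algebra_simps)
  then have "lam j / Lam lam j * (c j + d j)
      \<le> ((f (j - 1) - f T) - (f j - f T) + lam j * d j + K * (lam j)\<^sup>2) / Lam lam j"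
    using L by (simp add: divide_right_mono)
  also have "\<dots> = (f (j - 1) - f T) * ((1 - lam j) / Lam lam j) - (f j - f T) / Lam lam j
      + lam j / Lam lam j * (d j + K * lam j + (f (j - 1) - f T))"
    using L by (simp add: field_simps power2_eq_square)
  also have "(1 - lam j) / Lam lam j = 1 / Lam lam (j - 1)"
    using one_minus_lam_div_Lam j(1) lam_ne_1 .
  finally show ?thesis
    by simp
qed

lemma weighted_gap_sum_bound:
  assumes "1 \<le> T"
  shows "(\<Sum>j=2..T. lam j / Lam lam j * (c j + d j))
    \<le> (d 1 + (\<Sum>j=2..T. lam j / Lam lam j *
            (d j + Lam lam (j - 1) * (\<Sum>i=1..j-1. lam i / Lam lam i * d i))))
      + K * (1 + (\<Sum>j=2..T. lam j / Lam lam j *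
            (lam j + Lam lam (j - 1) * (\<Sum>i=1..j-1. (lam i)\<^sup>2 / Lam lam i))))"
proof -
  define a where "a j = (f j - f T) / Lam lam j" for j
  define S where "S m = (\<Sum>i=1..m. lam i / Lam lam i * d i) + K * (\<Sum>i=1..m. (lam i)\<^sup>2 / Lam lam i)"
    for m
  have term_bound: "lam j / Lam lam j * (c j + d j)
      \<le> a (j - 1) - a j + lam j / Lam lam j * (d j + K * lam j + Lam lam (j - 1) * S (j - 1))"
    if "j \<in> {2..T}" for j
  proof -
    have j: "1 \<le> j - 1" "j - 1 \<le> T" "1 \<le> j" "j \<le> T"
      using that by auto
    have "f (j - 1) - f T = Lam lam (j - 1) * a (j - 1)"
      using Lam_pos_T[OF j(1,2)] by (simp add: a_def)
    also have "\<dots> \<le> Lam lam (j - 1) * S (j - 1)"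
      using scaled_gap_bound[OF j(1,2)] Lam_pos_T[OF j(1,2)] unfolding a_def S_def
      by (intro mult_left_mono) auto
    finally have "d j + K * lam j + (f (j - 1) - f T) \<le> d j + K * lam j + Lam lam (j - 1) * S (j - 1)"
      by simp
    moreover have "0 \<le> lam j / Lam lam j"
      using lam_nonneg[OF j(3,4)] Lam_pos_T[OF j(3,4)] by simp
    ultimately have "lam j / Lam lam j * (d j + K * lam j + (f (j - 1) - f T))
        \<le> lam j / Lam lam j * (d j + K * lam j + Lam lam (j - 1) * S (j - 1))"
      by (rule mult_left_mono)
    then show ?thesis
      using weighted_gap_step[OF that] unfolding a_def by linarith
  qed
  have "a 1 \<le> d 1 + K" "a T = 0"
    using scaled_gap_bound[of 1] assms lam_first by (simp_all add: a_def)
  have "(\<Sum>j=2..T. lam j / Lam lam j * (c j + d j))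
      \<le> (\<Sum>j=2..T. a (j - 1) - a j + lam j / Lam lam j * (d j + K * lam j + Lam lam (j - 1) * S (j - 1)))"
    using term_bound by (rule sum_mono)
  also have "\<dots> = a 1 - a T
      + (\<Sum>j=2..T. lam j / Lam lam j * (d j + K * lam j + Lam lam (j - 1) * S (j - 1)))"
    using sum_diff_prev_telescope[OF assms, of a] by (simp add: sum.distrib)
  also have "\<dots> \<le> d 1 + K
      + (\<Sum>j=2..T. lam j / Lam lam j * (d j + K * lam j + Lam lam (j - 1) * S (j - 1)))"
    using \<open>a 1 \<le> d 1 + K\<close> \<open>a T = 0\<close> by simp
  also have "\<dots> = (d 1 + (\<Sum>j=2..T. lam j / Lam lam j *
            (d j + Lam lam (j - 1) * (\<Sum>i=1..j-1. lam i / Lam lam i * d i))))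
      + K * (1 + (\<Sum>j=2..T. lam j / Lam lam j *
            (lam j + Lam lam (j - 1) * (\<Sum>i=1..j-1. (lam i)\<^sup>2 / Lam lam i))))"
    by (simp add: S_def sum_distrib_left sum.distrib[symmetric] algebra_simps)
  finally show ?thesis .
qed

end


lemma phi_expansion:
  "phi g u \<beta> y = phi g u \<beta> x + inner (grad_phi g u \<beta> x) (y - x) + \<beta> / 2 * (norm (y - x))\<^sup>2"
proof -
  have "(norm (y - u))\<^sup>2 = (norm (x - u))\<^sup>2 + 2 * inner (x - u) (y - x) + (norm (y - x))\<^sup>2"
    using dot_norm[of "x - u" "y - x"] by simp
  then have "\<beta> / 2 * (norm (y - u))\<^sup>2
      = \<beta> / 2 * (norm (x - u))\<^sup>2 + inner (\<beta> *\<^sub>R (x - u)) (y - x) + \<beta> / 2 * (norm (y - x))\<^sup>2"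
    by (simp only: inner_scaleR_left) (simp add: distrib_left)
  then show ?thesis
    unfolding phi_def grad_phi_def by (simp add: inner_add_left inner_diff_right)
qed

lemma phi_convex_combination:
  "phi g u \<beta> ((1 - l) *\<^sub>R x + l *\<^sub>R v)
    = phi g u \<beta> x - l * inner (grad_phi g u \<beta> x) (x - v) + \<beta> / 2 * l\<^sup>2 * (norm (v - x))\<^sup>2"
proof -
  have "(1 - l) *\<^sub>R x + l *\<^sub>R v - x = l *\<^sub>R (v - x)"
    by (simp add: algebra_simps)
  then show ?thesis
    using phi_expansion[of g u \<beta> "(1 - l) *\<^sub>R x + l *\<^sub>R v" x]
    by (simp add: inner_diff_right power_mult_distrib) (simp add: algebra_simps)
qed

lemma phi_diff_le_inner_grad:
  assumes "0 \<le> \<beta>"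
  shows "phi g u \<beta> x - phi g u \<beta> y \<le> inner (grad_phi g u \<beta> x) (x - y)"
  using phi_expansion[of g u \<beta> y x] assms by (simp add: inner_diff_right)

lemma acgm_run_iterates_in:
  assumes run: "acgm_run X u g \<beta> \<eta> \<delta> us vs \<alpha> T" and "convex X" "u \<in> X" "j \<le> T"
  shows "us j \<in> X"
  using assms(4)
proof (induction j)
  case 0
  then show ?case
    using run \<open>u \<in> X\<close> by (simp add: acgm_run_def)
next
  case (Suc j)
  then have "us j \<in> X" "vs (Suc j) \<in> X" "\<alpha> (Suc j) \<in> {0..1}"
      "us (Suc j) = (1 - \<alpha> (Suc j)) *\<^sub>R us j + \<alpha> (Suc j) *\<^sub>R vs (Suc j)"
    using run by (auto simp: acgm_run_def)
  then show ?case
    using \<open>convex X\<close> by (simp add: convexD)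
qed

lemma acgm_run_inner_grad_le:
  assumes "acgm_run X u g \<beta> \<eta> \<delta> us vs \<alpha> T" "1 \<le> j" "j \<le> T" "x \<in> X"
  shows "inner (grad_phi g u \<beta> (us (j - 1))) (us (j - 1) - x)
    \<le> inner (grad_phi g u \<beta> (us (j - 1))) (us (j - 1) - vs j) + \<delta> j"
proof -
  have "inner (grad_phi g u \<beta> (us (j - 1))) (vs j - x) \<le> \<delta> j"
    using assms by (auto simp: acgm_run_def)
  then show ?thesis
    by (simp add: inner_diff_right)
qed

lemma acgm_run_value_gap:
  assumes "acgm_run X u g \<beta> \<eta> \<delta> us vs \<alpha> T" "0 \<le> \<beta>" "1 \<le> j" "j \<le> T" "x \<in> X"
  shows "phi g u \<beta> (us (j - 1)) - phi g u \<beta> x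
    \<le> inner (grad_phi g u \<beta> (us (j - 1))) (us (j - 1) - vs j) + \<delta> j"
  using phi_diff_le_inner_grad[OF assms(2)] acgm_run_inner_grad_le[OF assms(1,3-5)] by (rule order_trans)

lemma acgm_run_descent:
  assumes run: "acgm_run X u g \<beta> \<eta> \<delta> us vs \<alpha> T"
    and X: "convex X" "bounded X" "u \<in> X" and "0 \<le> \<beta>" and j: "1 \<le> j" "j \<le> T"
    and step: "phi g u \<beta> (us j) \<le> phi g u \<beta> ((1 - lam j) *\<^sub>R us (j - 1) + lam j *\<^sub>R vs j)"
  shows "phi g u \<beta> (us j)
    \<le> phi g u \<beta> (us (j - 1)) - lam j * inner (grad_phi g u \<beta> (us (j - 1))) (us (j - 1) - vs j)
      + \<beta> * (diameter X)\<^sup>2 / 2 * (lam j)\<^sup>2"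
proof -
  have "vs j \<in> X" "us (j - 1) \<in> X"
    using run j acgm_run_iterates_in[OF run X(1,3)] by (auto simp: acgm_run_def)
  then have "norm (vs j - us (j - 1)) \<le> diameter X"
    using diameter_bounded_bound[OF X(2)] by (simp add: dist_norm)
  then have "(norm (vs j - us (j - 1)))\<^sup>2 \<le> (diameter X)\<^sup>2"
    by (simp add: power_mono)
  then have "\<beta> / 2 * (lam j)\<^sup>2 * (norm (vs j - us (j - 1)))\<^sup>2 \<le> \<beta> / 2 * (lam j)\<^sup>2 * (diameter X)\<^sup>2"
    using \<open>0 \<le> \<beta>\<close> by (intro mult_left_mono) auto
  moreover have "\<beta> / 2 * (lam j)\<^sup>2 * (diameter X)\<^sup>2 = \<beta> * (diameter X)\<^sup>2 / 2 * (lam j)\<^sup>2"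
    by simp
  ultimately show ?thesis
    using step phi_convex_combination[of g u \<beta> "lam j" "us (j - 1)" "vs j"] by linarith
qed

theorem mainTheorem1:
  fixes X :: "(real ^ 'n) set" and u g :: "real ^ 'n"
    and \<beta> \<eta> :: real and \<delta> lam \<alpha> :: "nat \<Rightarrow> real"
    and us vs :: "nat \<Rightarrow> real ^ 'n" and T :: nat
  assumes "compact X" "convex X" "X \<noteq> {}"
    and "u \<in> X" and "\<beta> > 0" and "\<eta> > 0"
    and "\<forall>t\<ge>1. \<delta> t \<ge> 0"
    and "\<forall>t\<ge>1. lam t \<in> {0..1}" and "lam 1 = 1"
    and "\<forall>t\<in>{2..T}. lam t < 1"
    and "acgm_run X u g \<beta> \<eta> \<delta> us vs \<alpha> T"
    and "\<forall>t\<in>{1..T}. phi g u \<beta> (us t)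
            \<le> phi g u \<beta> ((1 - lam t) *\<^sub>R us (t - 1) + lam t *\<^sub>R vs t)"
    and "T \<ge> 2"
  shows "(\<Sum>j=2..T. lam j / Lam lam j *
            (SUP x\<in>X. inner (grad_phi g u \<beta> (us (j - 1))) (us (j - 1) - x)))
         \<le> (\<delta> 1 + (\<Sum>j=2..T. lam j / Lam lam j *
                 (\<delta> j + Lam lam (j - 1) * (\<Sum>i=1..j-1. lam i / Lam lam i * \<delta> i))))
           + \<beta> * (diameter X)\<^sup>2 / 2 *
             (1 + (\<Sum>j=2..T. lam j / Lam lam j *
                 (lam j + Lam lam (j - 1) * (\<Sum>i=1..j-1. (lam i)\<^sup>2 / Lam lam i))))"
proof -
  note run = assms(11) and \<beta> = less_imp_le[OF assms(5)]
  define c where "c j = inner (grad_phi g u \<beta> (us (j - 1))) (us (j - 1) - vs j)" for j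
  interpret cg_descent "\<lambda>j. phi g u \<beta> (us j)" c \<delta> lam "\<beta> * (diameter X)\<^sup>2 / 2" T
    unfolding cg_descent_def c_def
    using assms(8-10,12) acgm_run_descent[OF run assms(2) compact_imp_bounded[OF assms(1)] assms(4) \<beta>]
      acgm_run_value_gap[OF run \<beta> _ _ acgm_run_iterates_in[OF run assms(2,4) order_refl]]
    by auto
  have "(SUP x\<in>X. inner (grad_phi g u \<beta> (us (j - 1))) (us (j - 1) - x)) \<le> c j + \<delta> j"
    if "j \<in> {2..T}" for j
    using acgm_run_inner_grad_le[OF run] that assms(3) unfolding c_def by (auto intro: cSUP_least)
  moreover have "0 \<le> lam j / Lam lam j" if "j \<in> {2..T}" for j
    using that lam_nonneg Lam_pos_T by (simp add: less_imp_le)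
  ultimately have sup_le: "(\<Sum>j=2..T. lam j / Lam lam j *
        (SUP x\<in>X. inner (grad_phi g u \<beta> (us (j - 1))) (us (j - 1) - x)))
      \<le> (\<Sum>j=2..T. lam j / Lam lam j * (c j + \<delta> j))"
    by (intro sum_mono mult_left_mono)
  have "1 \<le> T"
    using assms(13) by simp
  from sup_le show ?thesis
    by (rule order_trans[OF _ weighted_gap_sum_bound[OF \<open>1 \<le> T\<close>]])
qed

end
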